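(* Let $\|\cdot\|_{(i)}$, $i\in[k]$, be norms on a finite-dimensional real inner product space $V$ with dual norms $\|\cdot\|^\circ_{(i)}$, let $0\neq x_0\in V$, $\mu_i^\ast=1/\|x_0\|_{(i)}$ and $\|x\|_{\max,\mu^\ast}=\max_i\mu^\ast_i\|x\|_{(i)}$ (so $\|x_0\|_{\max,\mu^\ast}=1$). Then for every $g\in V$, $$\inf_{y\in\mathrm{cone}\,\partial\|\cdot\|_{\max,\mu^\ast}(x_0)}\|g-y\|_2=\inf_{y\in\sum_{i=1}^k\mathrm{cone}\,\partial\|\cdot\|_{(i)}(x_0)}\|g-y\|_2$$ and this equals $$\inf\Big\{\Big\|g-\sum_{i=1}^k x_i\Big\|_2:\ \tau_i\ge0,\ x_i\in V,\ \langle x_i,x_0\rangle=\tau_i\|x_0\|_{\max,\mu^\ast},\ \|x_i\|^\circ_{(i)}\le\tau_i\mu^\ast_i\ \forall i\Big\}.$$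
   Context: $\partial$ denotes the subdifferential; $\mathrm{cone}(S)=\{\tau x:x\in S,\tau>0\}$; sums of sets are Minkowski sums; the dual norm of $\|\cdot\|$ is $\|y\|^\circ=\sup_{\|x\|=1}|\langle x,y\rangle|$. *)

theory Defs
  imports "HOL-Analysis.Analysis"
begin

definition is_norm :: "('a::real_vector \<Rightarrow> real) \<Rightarrow> bool" where
  "is_norm N \<longleftrightarrow> (\<forall>x. 0 \<le> N x) \<and> (\<forall>x. N x = 0 \<longleftrightarrow> x = 0)
     \<and> (\<forall>c x. N (c *\<^sub>R x) = \<bar>c\<bar> * N x) \<and> (\<forall>x y. N (x + y) \<le> N x + N y)"

definition dual_norm :: "('a::real_inner \<Rightarrow> real) \<Rightarrow> 'a \<Rightarrow> real" where
  "dual_norm N y = Sup {\<bar>inner x y\<bar> | x. N x = 1}"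

definition subdifferential :: "('a::real_inner \<Rightarrow> real) \<Rightarrow> 'a \<Rightarrow> 'a set" where
  "subdifferential f x = {g. \<forall>y. f x + inner g (y - x) \<le> f y}"

definition pos_cone :: "'a::real_vector set \<Rightarrow> 'a set" where
  "pos_cone S = {\<tau> *\<^sub>R x | \<tau> x. \<tau> > 0 \<and> x \<in> S}"

end

theory Submission
  imports Defs
begin

(* The subdifferential at x0 of a maximum of norms that are all active at x0 (here
   mu_i * ||x0||_(i) = 1 for every i) is the convex hull of their subdifferentials; both
   inclusions come from separating hyperplanes. Hence the cone over the subdifferential of the
   max-norm lies between the Minkowski sum of the cones over the individual subdifferentials and
   the same sum with 0 adjoined to every cone, and the latter sum lies in the closure of the
   former. All three sets therefore have the same distance from g. Finally, x = t s with
   t >= 0 and s a subgradient of ||.|| at x0 exactly when ||x||^o <= t and <x, x0> = t ||x0||,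
   which turns the sum with 0 adjoined into the parametrised set of the theorem. *)

lemma is_norm_zero: "is_norm f \<Longrightarrow> f 0 = 0"
  unfolding is_norm_def by auto

lemma is_norm_scaleR: "is_norm f \<Longrightarrow> f (c *\<^sub>R x) = \<bar>c\<bar> * f x"
  unfolding is_norm_def by auto

lemma is_norm_triangle: "is_norm f \<Longrightarrow> f (x + y) \<le> f x + f y"
  unfolding is_norm_def by auto

lemma is_norm_nonneg: "is_norm f \<Longrightarrow> 0 \<le> f x"
  unfolding is_norm_def by auto

lemma is_norm_pos: "is_norm f \<Longrightarrow> x \<noteq> 0 \<Longrightarrow> 0 < f x"
  unfolding is_norm_def by (metis order_le_less)

lemma is_norm_minus: "is_norm f \<Longrightarrow> f (- x) = f x"
  using is_norm_scaleR[of f "-1" x] by simp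

lemma is_norm_cmult: "is_norm f \<Longrightarrow> 0 < c \<Longrightarrow> is_norm (\<lambda>x. c * f x)"
  unfolding is_norm_def by (auto simp: distrib_left[symmetric] mult_left_mono)

lemma is_norm_convex_on:
  assumes "is_norm f" shows "convex_on UNIV f"
  unfolding convex_on_def
  using is_norm_triangle[OF assms] is_norm_scaleR[OF assms]
  by (metis abs_of_nonneg convex_UNIV)

lemma is_norm_sum:
  assumes "is_norm f" "finite A" shows "f (sum g A) \<le> (\<Sum>a\<in>A. f (g a))"
  using assms(2)
proof (induction A rule: finite_induct)
  case empty then show ?case using is_norm_zero[OF assms(1)] by simp
next
  case (insert a A)
  then show ?case using is_norm_triangle[OF assms(1), of "g a" "sum g A"] by simp
qed

lemma is_norm_le_norm:
  fixes N :: "'a::euclidean_space \<Rightarrow> real"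
  assumes "is_norm N" shows "N x \<le> (\<Sum>b\<in>Basis. N b) * norm x"
proof -
  have "N x = N (\<Sum>b\<in>Basis. (x \<bullet> b) *\<^sub>R b)" by (simp add: euclidean_representation)
  also have "\<dots> \<le> (\<Sum>b\<in>Basis. N ((x \<bullet> b) *\<^sub>R b))" by (rule is_norm_sum[OF assms]) simp
  also have "\<dots> = (\<Sum>b\<in>Basis. \<bar>x \<bullet> b\<bar> * N b)" using is_norm_scaleR[OF assms] by simp
  also have "\<dots> \<le> (\<Sum>b\<in>Basis. norm x * N b)"
    by (intro sum_mono mult_right_mono Basis_le_norm is_norm_nonneg[OF assms])
  finally have "N x \<le> (\<Sum>b\<in>Basis. N b * norm x)" by (simp add: mult.commute)
  then show ?thesis by (simp add: sum_distrib_right)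
qed

lemma is_norm_continuous_on:
  fixes N :: "'a::euclidean_space \<Rightarrow> real"
  assumes "is_norm N" shows "continuous_on S N"
proof -
  have "dist (N x) (N y) \<le> (\<Sum>b\<in>Basis. N b) * dist x y" for x y
  proof -
    have "N x \<le> N (x - y) + N y" "N y \<le> N (x - y) + N x"
      using is_norm_triangle[OF assms, of "x - y" y] is_norm_triangle[OF assms, of "y - x" x]
        is_norm_minus[OF assms, of "x - y"] by simp_all
    then have "dist (N x) (N y) \<le> N (x - y)" by (simp add: dist_real_def)
    also have "\<dots> \<le> (\<Sum>b\<in>Basis. N b) * dist x y"
      using is_norm_le_norm[OF assms] by (simp add: dist_norm)
    finally show ?thesis .
  qed
  then have "(\<Sum>b\<in>Basis. N b)-lipschitz_on S N"
    by (intro lipschitz_onI sum_nonneg is_norm_nonneg[OF assms])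
  then show ?thesis by (rule lipschitz_on_continuous_on)
qed

lemma is_norm_ge_norm:
  fixes N :: "'a::euclidean_space \<Rightarrow> real"
  assumes "is_norm N" obtains m where "0 < m" "\<And>x. m * norm x \<le> N x"
proof -
  obtain b :: 'a where "b \<in> Basis" using nonempty_Basis by blast
  then have "sphere (0::'a) 1 \<noteq> {}" by (auto intro!: exI[of _ b])
  then obtain u where u: "u \<in> sphere 0 1" and min: "\<forall>y\<in>sphere 0 1. N u \<le> N y"
    using continuous_attains_inf[OF compact_sphere _ is_norm_continuous_on[OF assms]] by blast
  have "N u * norm x \<le> N x" for x
  proof (cases "x = 0")
    case True then show ?thesis using is_norm_zero[OF assms] by simp
  next
    case False
    then have "N u \<le> N ((1 / norm x) *\<^sub>R x)" using min by simp
    also have "\<dots> = N x / norm x" using is_norm_scaleR[OF assms] by simp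
    finally show ?thesis using False by (simp add: field_simps)
  qed
  moreover have "0 < N u" using u by (intro is_norm_pos[OF assms]) auto
  ultimately show ?thesis using that by blast
qed

lemma subdifferential_norm_iff:
  assumes f: "is_norm f"
  shows "s \<in> subdifferential f x0 \<longleftrightarrow> (\<forall>z. inner s z \<le> f z) \<and> inner s x0 = f x0"
proof
  assume "s \<in> subdifferential f x0"
  then have h: "\<And>y. f x0 + inner s (y - x0) \<le> f y" unfolding subdifferential_def by auto
  have "f x0 \<le> inner s x0" using h[of 0] is_norm_zero[OF f] by (simp add: inner_diff_right)
  moreover have "inner s x0 \<le> f x0"
    using h[of "2 *\<^sub>R x0"] is_norm_scaleR[OF f, of 2 x0] by (simp add: inner_diff_right algebra_simps)
  ultimately have "inner s x0 = f x0" by linarith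
  then show "(\<forall>z. inner s z \<le> f z) \<and> inner s x0 = f x0"
    using h by (simp add: inner_diff_right)
next
  assume "(\<forall>z. inner s z \<le> f z) \<and> inner s x0 = f x0"
  then show "s \<in> subdifferential f x0" unfolding subdifferential_def
    by (auto simp: inner_diff_right)
qed

lemma convex_subdifferential: "convex (subdifferential f x0)"
  unfolding subdifferential_def
proof (rule convexI, safe)
  fix g h :: 'a and u v :: real and y
  assume "\<forall>y. f x0 + inner g (y - x0) \<le> f y" "\<forall>y. f x0 + inner h (y - x0) \<le> f y"
    and uv: "0 \<le> u" "0 \<le> v" "u + v = 1"
  then have "u * (f x0 + inner g (y - x0)) + v * (f x0 + inner h (y - x0)) \<le> u * f y + v * f y"
    by (intro add_mono mult_left_mono) auto
  moreover have "u * f x0 + v * f x0 = f x0" "u * f y + v * f y = f y"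
    using uv by (metis distrib_right mult_1)+
  ultimately show "f x0 + inner (u *\<^sub>R g + v *\<^sub>R h) (y - x0) \<le> f y"
    by (simp add: inner_add_left algebra_simps)
qed

lemma compact_subdifferential_norm:
  fixes f :: "'a::euclidean_space \<Rightarrow> real"
  assumes f: "is_norm f" shows "compact (subdifferential f x0)"
proof -
  have "subdifferential f x0 = (\<Inter>y. {g. f x0 + inner g (y - x0) \<le> f y})"
    unfolding subdifferential_def by auto
  moreover have "closed {g. f x0 + inner g (y - x0) \<le> f y}" for y
    by (intro closed_Collect_le continuous_intros)
  ultimately have "closed (subdifferential f x0)" by auto
  moreover have "norm s \<le> (\<Sum>b\<in>Basis. f b)" if "s \<in> subdifferential f x0" for s
  proof -
    have "norm s * norm s = inner s s" by (simp add: dot_square_norm power2_eq_square)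
    also have "\<dots> \<le> f s" using that subdifferential_norm_iff[OF f] by blast
    also have "\<dots> \<le> (\<Sum>b\<in>Basis. f b) * norm s" by (rule is_norm_le_norm[OF f])
    finally show ?thesis
      by (cases "s = 0") (auto simp: sum_nonneg is_norm_nonneg[OF f])
  qed
  then have "bounded (subdifferential f x0)" unfolding bounded_iff by blast
  ultimately show ?thesis by (simp add: compact_eq_bounded_closed)
qed

lemma subdifferential_cmult:
  assumes "0 < c"
  shows "subdifferential (\<lambda>x. c * f x) x0 = (*\<^sub>R) c ` subdifferential f x0"
proof -
  have "s \<in> subdifferential (\<lambda>x. c * f x) x0 \<longleftrightarrow> (1 / c) *\<^sub>R s \<in> subdifferential f x0" for s
  proof -
    have "c * f x0 + inner s (y - x0) \<le> c * f y \<longleftrightarrow>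
          f x0 + inner ((1 / c) *\<^sub>R s) (y - x0) \<le> f y" for y
      using assms by (simp add: field_simps)
    then show ?thesis unfolding subdifferential_def by simp
  qed
  then show ?thesis using assms by (force simp: image_iff)
qed

lemma convex_strict_epigraph:
  assumes "convex_on UNIV f" shows "convex {p. f (fst p) < snd p}"
proof (rule convexI)
  fix x y :: "'a \<times> real" and u v :: real
  assume x: "x \<in> {p. f (fst p) < snd p}" and y: "y \<in> {p. f (fst p) < snd p}"
    and uv: "0 \<le> u" "0 \<le> v" "u + v = 1"
  have "f (u *\<^sub>R fst x + v *\<^sub>R fst y) \<le> u * f (fst x) + v * f (fst y)"
    using assms uv unfolding convex_on_def by blast
  also have "\<dots> < u * snd x + v * snd y"
  proof (cases "u = 0")
    case True then show ?thesis using uv y by simp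
  next
    case False
    then show ?thesis using uv x y by (intro add_less_le_mono mult_strict_left_mono mult_left_mono) auto
  qed
  finally show "u *\<^sub>R x + v *\<^sub>R y \<in> {p. f (fst p) < snd p}" by simp
qed

text \<open>The separating hyperplane cannot be vertical, because the strict epigraph contains
  whole vertical half-lines over every point.\<close>
lemma separating_hyperplane_strict_epigraph:
  fixes f :: "'a::euclidean_space \<Rightarrow> real"
  assumes f: "is_norm f" and S: "convex S" "S \<noteq> {}" and disj: "S \<inter> {p. f (fst p) < snd p} = {}"
  obtains a \<beta> b where "0 < \<beta>" "\<forall>p\<in>S. inner a (fst p) + \<beta> * snd p \<le> b"
    "\<And>z. b \<le> inner a z + \<beta> * f z"
proof -
  have "(0, f 0 + 1) \<in> {p. f (fst p) < snd p}" by simp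
  then have T: "{p. f (fst p) < snd p} \<noteq> {}" by blast
  obtain a b where a: "a \<noteq> 0" and hS: "\<forall>x\<in>S. inner a x \<le> b"
    and hT: "\<forall>x\<in>{p. f (fst p) < snd p}. b \<le> inner a x"
    using separating_hyperplane_sets[OF S(1) convex_strict_epigraph[OF is_norm_convex_on[OF f]] S(2) T disj]
    by blast
  obtain a1 \<beta> where a1: "a = (a1, \<beta>)" by (cases a)
  have above: "b \<le> inner a1 z + \<beta> * r" if "f z < r" for z r
    using hT that unfolding a1 by auto
  have "0 \<le> \<beta>"
  proof (rule ccontr)
    assume neg: "\<not> 0 \<le> \<beta>"
    have "b \<le> inner a1 0 + \<beta> * (\<bar>b / \<beta>\<bar> + 1)"
      using is_norm_zero[OF f] by (intro above) (simp add: add_nonneg_pos)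
    moreover have "\<beta> * \<bar>b / \<beta>\<bar> = - \<bar>b\<bar>" using neg by (simp add: abs_div)
    moreover have "\<beta> * (\<bar>b / \<beta>\<bar> + 1) = \<beta> * \<bar>b / \<beta>\<bar> + \<beta>" by (simp only: distrib_left mult_1_right)
    ultimately show False using neg by simp
  qed
  moreover have "\<beta> \<noteq> 0"
  proof
    assume \<beta>: "\<beta> = 0"
    then have "a1 \<noteq> 0" using a a1 by (auto simp: zero_prod_def)
    define z where "z = (- (\<bar>b\<bar> + 1) / inner a1 a1) *\<^sub>R a1"
    have "b \<le> inner a1 z" using above[of z "f z + 1"] \<beta> by simp
    moreover have "inner a1 z = - (\<bar>b\<bar> + 1)" using \<open>a1 \<noteq> 0\<close> unfolding z_def by simp
    ultimately show False by linarith
  qed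
  ultimately have \<beta>: "0 < \<beta>" by simp
  have "b \<le> inner a1 z + \<beta> * f z" for z
  proof (rule field_le_epsilon)
    fix e :: real assume "0 < e"
    then have "b \<le> inner a1 z + \<beta> * (f z + e / \<beta>)" using \<beta> by (intro above) simp
    then show "b \<le> inner a1 z + \<beta> * f z + e" using \<beta> by (simp add: distrib_left)
  qed
  moreover have "\<forall>p\<in>S. inner a1 (fst p) + \<beta> * snd p \<le> b"
    using hS unfolding a1 by (auto simp: inner_prod_def)
  ultimately show ?thesis using that \<beta> by blast
qed

text \<open>Separate the ray, lifted to the graph of the linear lower bound, from the strict epigraph.\<close>
lemma exists_subgradient_ge:
  fixes f :: "'a::euclidean_space \<Rightarrow> real"
  assumes f: "is_norm f" and h: "\<forall>t\<ge>0. f x0 + t * c \<le> f (x0 + t *\<^sub>R d)"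
  obtains s where "s \<in> subdifferential f x0" "c \<le> inner s d"
proof -
  define S where "S = (\<lambda>t. (x0, f x0) + t *\<^sub>R (d, c)) ` {0..}"
  have "S = (+) (x0, f x0) ` ((\<lambda>t. t *\<^sub>R (d, c)) ` {0..})" unfolding S_def by (simp add: image_image)
  then have "convex S" by (metis convex_translation convex_scaled convex_real_interval(1))
  moreover have "S \<noteq> {}" unfolding S_def by auto
  moreover have "S \<inter> {p. f (fst p) < snd p} = {}"
  proof -
    have "\<not> f (x0 + t *\<^sub>R d) < f x0 + t * c" if "0 \<le> t" for t
      using h that by (simp add: not_less)
    then show ?thesis unfolding S_def by auto
  qed
  ultimately obtain \<beta> a b where \<beta>: "0 < \<beta>" and below: "\<forall>p\<in>S. inner a (fst p) + \<beta> * snd p \<le> b"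
    and above: "\<And>z. b \<le> inner a z + \<beta> * f z"
    by (rule separating_hyperplane_strict_epigraph[OF f]) blast
  have ray: "inner a (x0 + t *\<^sub>R d) + \<beta> * (f x0 + t * c) \<le> b" if "0 \<le> t" for t
  proof -
    have "(x0, f x0) + t *\<^sub>R (d, c) \<in> S" using that unfolding S_def by blast
    from bspec[OF below this] show ?thesis by simp
  qed
  have b: "b = inner a x0 + \<beta> * f x0" using ray[of 0] above[of x0] by simp
  define s where "s = (- 1 / \<beta>) *\<^sub>R a"
  have "s \<in> subdifferential f x0"
    unfolding subdifferential_def
  proof safe
    fix y
    have "\<beta> * inner s (y - x0) = inner a x0 - inner a y"
      using \<beta> unfolding s_def by (simp add: inner_diff_right right_diff_distrib)
    then have "\<beta> * (f x0 + inner s (y - x0)) \<le> \<beta> * f y"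
      using above[of y] b unfolding distrib_left by linarith
    then show "f x0 + inner s (y - x0) \<le> f y" using \<beta> by simp
  qed
  moreover have "c \<le> inner s d"
  proof -
    have "\<beta> * c \<le> - inner a d" using ray[of 1] b by (simp add: inner_add_right distrib_left)
    then have "c \<le> - inner a d / \<beta>" using \<beta> by (simp add: field_simps)
    then show ?thesis unfolding s_def by simp
  qed
  ultimately show ?thesis using that by blast
qed

lemma subdifferential_norm_nonempty:
  fixes f :: "'a::euclidean_space \<Rightarrow> real"
  assumes "is_norm f" shows "subdifferential f x0 \<noteq> {}"
  using exists_subgradient_ge[OF assms, of x0 0 0] by auto

lemma is_norm_lt_affine_shrink:
  assumes f: "is_norm f" and st: "0 < s" "s \<le> t" and lt: "f (x + t *\<^sub>R d) < f x + t * c"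
  shows "f (x + s *\<^sub>R d) < f x + s * c"
proof -
  define \<theta> where "\<theta> = s / t"
  have \<theta>: "0 < \<theta>" "\<theta> \<le> 1" "\<theta> * t = s" unfolding \<theta>_def using st by auto
  have "x + s *\<^sub>R d = (1 - \<theta>) *\<^sub>R x + \<theta> *\<^sub>R (x + t *\<^sub>R d)"
    by (simp add: algebra_simps flip: \<theta>(3))
  then have "f (x + s *\<^sub>R d) \<le> (1 - \<theta>) * f x + \<theta> * f (x + t *\<^sub>R d)"
    using convex_onD[OF is_norm_convex_on[OF f], of \<theta> x "x + t *\<^sub>R d"] \<theta> by simp
  also have "\<dots> < (1 - \<theta>) * f x + \<theta> * (f x + t * c)"
    using lt \<theta> by simp
  also have "\<dots> = f x + s * c" by (simp add: algebra_simps flip: \<theta>(3))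
  finally show ?thesis .
qed

text \<open>If \<open>y\<close> lies outside the convex hull, separation gives a direction \<open>d\<close> such that each
  \<open>F i\<close> drops below the affine prediction \<open>r + t \<langle>y, d\<rangle>\<close> at some point \<open>x0 + t d\<close>
  (otherwise \<open>exists_subgradient_ge\<close> would give a subgradient of \<open>F i\<close> on the wrong side);
  by convexity this happens for all \<open>F i\<close> at a common \<open>t\<close>, contradicting the subgradient
  inequality of \<open>y\<close> for the maximum.\<close>
lemma subdifferential_Max_norms_subset:
  fixes F :: "'i \<Rightarrow> 'a::euclidean_space \<Rightarrow> real"
  assumes I: "finite I" "I \<noteq> {}" and F: "\<forall>i\<in>I. is_norm (F i)" and active: "\<forall>i\<in>I. F i x0 = r"
  shows "subdifferential (\<lambda>x. Max ((\<lambda>i. F i x) ` I)) x0 \<subseteq> convex hull (\<Union>i\<in>I. subdifferential (F i) x0)"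
proof
  fix y assume y: "y \<in> subdifferential (\<lambda>x. Max ((\<lambda>i. F i x) ` I)) x0"
  define C where "C = convex hull (\<Union>i\<in>I. subdifferential (F i) x0)"
  have "convex C" unfolding C_def by simp
  have "compact C"
    unfolding C_def using F I by (intro compact_convex_hull compact_UN) (auto simp: compact_subdifferential_norm)
  show "y \<in> C"
  proof (rule ccontr)
    assume "y \<notin> C"
    then obtain a b where ay: "inner a y < b" and aC: "\<forall>x\<in>C. b < inner a x"
      using separating_hyperplane_closed_point[OF \<open>convex C\<close> compact_imp_closed[OF \<open>compact C\<close>]]
      by blast
    have "\<exists>t>0. F i (x0 + t *\<^sub>R (- a)) < r + t * inner y (- a)" if i: "i \<in> I" for i
    proof (rule ccontr)
      assume "\<not> ?thesis"
      then have "\<forall>t\<ge>0. F i x0 + t * inner y (- a) \<le> F i (x0 + t *\<^sub>R (- a))"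
        using active i by (metis add_0_right le_less mult_zero_left not_le scaleR_zero_left)
      then obtain s where "s \<in> subdifferential (F i) x0" "inner y (- a) \<le> inner s (- a)"
        using exists_subgradient_ge F i by blast
      moreover from this(1) have "s \<in> C" unfolding C_def using i by (meson UN_I hull_inc)
      ultimately show False using ay aC by (auto simp: inner_commute)
    qed
    then obtain t where t: "\<forall>i\<in>I. 0 < t i \<and> F i (x0 + t i *\<^sub>R (- a)) < r + t i * inner y (- a)"
      by metis
    define s where "s = Min (t ` I)"
    have s: "0 < s" "\<forall>i\<in>I. s \<le> t i" unfolding s_def using t I by auto
    have "F i (x0 + s *\<^sub>R (- a)) < r + s * inner y (- a)" if "i \<in> I" for i
    proof -
      have "F i (x0 + t i *\<^sub>R (- a)) < F i x0 + t i * inner y (- a)" using t active that by auto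
      then show ?thesis
        using is_norm_lt_affine_shrink[of "F i" s "t i" x0 "- a" "inner y (- a)"] F s active that
        by auto
    qed
    then have "Max ((\<lambda>i. F i (x0 + s *\<^sub>R (- a))) ` I) < r + s * inner y (- a)"
      using I by simp
    moreover have "(\<lambda>i. F i x0) ` I = {r}" using active I by auto
    moreover have "Max ((\<lambda>i. F i x0) ` I) + inner y ((x0 + s *\<^sub>R (- a)) - x0)
        \<le> Max ((\<lambda>i. F i (x0 + s *\<^sub>R (- a))) ` I)"
      using y unfolding subdifferential_def mem_Collect_eq by (rule spec)
    ultimately show False by simp
  qed
qed

lemma subdifferential_Max_norms:
  fixes F :: "'i \<Rightarrow> 'a::euclidean_space \<Rightarrow> real"
  assumes I: "finite I" "I \<noteq> {}" and F: "\<forall>i\<in>I. is_norm (F i)" and active: "\<forall>i\<in>I. F i x0 = r"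
  shows "subdifferential (\<lambda>x. Max ((\<lambda>i. F i x) ` I)) x0 = convex hull (\<Union>i\<in>I. subdifferential (F i) x0)"
proof (rule equalityI[OF subdifferential_Max_norms_subset[OF assms]])
  have "(\<lambda>i. F i x0) ` I = {r}" using active I by auto
  have "subdifferential (F i) x0 \<subseteq> subdifferential (\<lambda>x. Max ((\<lambda>i. F i x) ` I)) x0"
    if i: "i \<in> I" for i
  proof
    fix s assume s: "s \<in> subdifferential (F i) x0"
    have "F i x0 + inner s (z - x0) \<le> Max ((\<lambda>i. F i z) ` I)" for z
    proof -
      have "F i x0 + inner s (z - x0) \<le> F i z" using s unfolding subdifferential_def by blast
      also have "F i z \<le> Max ((\<lambda>i. F i z) ` I)" using I i by (intro Max_ge) auto
      finally show ?thesis .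
    qed
    then show "s \<in> subdifferential (\<lambda>x. Max ((\<lambda>i. F i x) ` I)) x0"
      using \<open>(\<lambda>i. F i x0) ` I = {r}\<close> active i unfolding subdifferential_def by simp
  qed
  then show "convex hull (\<Union>i\<in>I. subdifferential (F i) x0) \<subseteq> subdifferential (\<lambda>x. Max ((\<lambda>i. F i x) ` I)) x0"
    by (intro hull_minimal convex_subdifferential) auto
qed

lemma pos_cone_scaleR_image:
  assumes "0 < c" shows "pos_cone ((*\<^sub>R) c ` A) = pos_cone A"
proof (intro equalityI subsetI)
  fix y assume "y \<in> pos_cone ((*\<^sub>R) c ` A)"
  then obtain \<tau> a where "y = (\<tau> * c) *\<^sub>R a" "0 < \<tau>" "a \<in> A" unfolding pos_cone_def by auto
  then show "y \<in> pos_cone A" unfolding pos_cone_def using assms by (blast intro: mult_pos_pos)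
next
  fix y assume "y \<in> pos_cone A"
  then obtain \<tau> a where "y = \<tau> *\<^sub>R a" "0 < \<tau>" "a \<in> A" unfolding pos_cone_def by auto
  moreover have "\<tau> *\<^sub>R a = (\<tau> / c) *\<^sub>R (c *\<^sub>R a)" using assms by simp
  ultimately show "y \<in> pos_cone ((*\<^sub>R) c ` A)"
    unfolding pos_cone_def using assms by (blast intro: divide_pos_pos)
qed

lemma pos_cone_subdifferential_cmult:
  "0 < c \<Longrightarrow> pos_cone (subdifferential (\<lambda>x. c * f x) x0) = pos_cone (subdifferential f x0)"
  by (simp add: subdifferential_cmult pos_cone_scaleR_image)

lemma sum_pos_cone_subset_pos_cone_convex_hull:
  assumes I: "finite I" "I \<noteq> {}"
  shows "(\<Sum>i\<in>I. pos_cone (A i)) \<subseteq> pos_cone (convex hull (\<Union>i\<in>I. A i))"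
proof
  fix y assume "y \<in> (\<Sum>i\<in>I. pos_cone (A i))"
  then obtain x where y: "y = (\<Sum>i\<in>I. x i)" and x: "\<forall>i\<in>I. x i \<in> pos_cone (A i)"
    unfolding set_sum_alt[OF I(1)] by blast
  then have "\<forall>i\<in>I. \<exists>t a. x i = t *\<^sub>R a \<and> 0 < t \<and> a \<in> A i" unfolding pos_cone_def by blast
  then obtain t a where ta: "\<forall>i\<in>I. x i = t i *\<^sub>R a i \<and> 0 < t i \<and> a i \<in> A i" by metis
  define T where "T = (\<Sum>i\<in>I. t i)"
  have T: "0 < T" unfolding T_def using I ta by (intro sum_pos) auto
  have "(\<Sum>i\<in>I. (t i / T) *\<^sub>R a i) \<in> convex hull (\<Union>i\<in>I. A i)"
    using I ta T by (intro convex_sum) (auto simp: T_def simp flip: sum_divide_distrib intro!: hull_inc)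
  moreover have "y = T *\<^sub>R (\<Sum>i\<in>I. (t i / T) *\<^sub>R a i)"
    using y ta T by (simp add: scaleR_sum_right)
  ultimately show "y \<in> pos_cone (convex hull (\<Union>i\<in>I. A i))" unfolding pos_cone_def using T by blast
qed

lemma pos_cone_convex_hull_subset_sum:
  assumes I: "finite I" and A: "\<forall>i\<in>I. convex (A i) \<and> A i \<noteq> {}"
  shows "pos_cone (convex hull (\<Union>i\<in>I. A i)) \<subseteq> (\<Sum>i\<in>I. insert 0 (pos_cone (A i)))"
proof
  fix y assume "y \<in> pos_cone (convex hull (\<Union>i\<in>I. A i))"
  then obtain \<tau> l a where y: "y = \<tau> *\<^sub>R (\<Sum>i\<in>I. l i *\<^sub>R a i)" and \<tau>: "0 < \<tau>"
    and la: "\<forall>i\<in>I. 0 \<le> l i \<and> a i \<in> A i"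
    unfolding pos_cone_def convex_hull_finite_union[OF I A] by blast
  have "y = (\<Sum>i\<in>I. (\<tau> * l i) *\<^sub>R a i)" using y by (simp add: scaleR_sum_right)
  moreover have "(\<tau> * l i) *\<^sub>R a i \<in> insert 0 (pos_cone (A i))" if "i \<in> I" for i
    using la that \<tau> unfolding pos_cone_def by (cases "l i = 0") force+
  ultimately show "y \<in> (\<Sum>i\<in>I. insert 0 (pos_cone (A i)))"
    unfolding set_sum_alt[OF I] by blast
qed

text \<open>A zero summand is the limit of the summands \<open>a / (n + 1)\<close> from its cone.\<close>
lemma sum_insert_zero_pos_cone_subset_closure:
  fixes A :: "'i \<Rightarrow> 'a::real_normed_vector set"
  assumes I: "finite I" and A: "\<forall>i\<in>I. A i \<noteq> {}"
  shows "(\<Sum>i\<in>I. insert 0 (pos_cone (A i))) \<subseteq> closure (\<Sum>i\<in>I. pos_cone (A i))"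
proof
  fix y assume "y \<in> (\<Sum>i\<in>I. insert 0 (pos_cone (A i)))"
  then obtain x where y: "y = (\<Sum>i\<in>I. x i)" and x: "\<forall>i\<in>I. x i \<in> insert 0 (pos_cone (A i))"
    unfolding set_sum_alt[OF I] by blast
  obtain a where a: "\<forall>i\<in>I. a i \<in> A i" using bchoice[of I "\<lambda>i a. a \<in> A i"] A by blast
  define z where "z n i = (if x i = 0 then inverse (real (Suc n)) *\<^sub>R a i else x i)" for n i
  have "z n i \<in> pos_cone (A i)" if "i \<in> I" for n i
  proof (cases "x i = 0")
    case True
    then show ?thesis using a that unfolding z_def pos_cone_def
      by (auto intro!: exI[of _ "inverse (real (Suc n))"])
  next
    case False
    then show ?thesis using x that unfolding z_def by auto
  qed
  then have "(\<Sum>i\<in>I. z n i) \<in> (\<Sum>i\<in>I. pos_cone (A i))" for n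
    unfolding set_sum_alt[OF I] by blast
  moreover have "(\<lambda>n. \<Sum>i\<in>I. z n i) \<longlonglongrightarrow> y"
  proof -
    have "(\<lambda>n. z n i) \<longlonglongrightarrow> x i" for i
      unfolding z_def using tendsto_scaleR[OF LIMSEQ_inverse_real_of_nat tendsto_const, of "a i"]
      by (cases "x i = 0") auto
    then show ?thesis unfolding y by (intro tendsto_sum) auto
  qed
  ultimately show "y \<in> closure (\<Sum>i\<in>I. pos_cone (A i))"
    unfolding closure_sequential by (intro exI[of _ "\<lambda>n. \<Sum>i\<in>I. z n i"]) auto
qed

lemma infdist_eq_of_subset_closure:
  assumes "S \<noteq> {}" "S \<subseteq> T" "T \<subseteq> closure S"
  shows "infdist x T = infdist x S"
proof (rule antisym)
  show "infdist x T \<le> infdist x S" using assms(2,1) by (rule infdist_mono)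
  have "infdist x (closure S) \<le> infdist x T" using assms by (intro infdist_mono) auto
  then show "infdist x S \<le> infdist x T" by (simp add: infdist_eq_setdist)
qed

lemma Inf_norm_diff_image_eq_of_subset_closure:
  assumes "S \<noteq> {}" "S \<subseteq> T" "T \<subseteq> closure S"
  shows "Inf ((\<lambda>y. norm (g - y)) ` T) = Inf ((\<lambda>y. norm (g - y)) ` S)"
proof -
  have "T \<noteq> {}" using assms by auto
  then show ?thesis
    using infdist_eq_of_subset_closure[OF assms, of g] assms(1) by (simp add: infdist_notempty dist_norm)
qed

lemma pos_cone_subdifferential_Max_norms_between:
  fixes F :: "'i \<Rightarrow> 'a::euclidean_space \<Rightarrow> real"
  assumes I: "finite I" "I \<noteq> {}" and F: "\<forall>i\<in>I. is_norm (F i)" and active: "\<forall>i\<in>I. F i x0 = r"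
  defines "S \<equiv> (\<Sum>i\<in>I. pos_cone (subdifferential (F i) x0))"
    and "Z \<equiv> (\<Sum>i\<in>I. insert 0 (pos_cone (subdifferential (F i) x0)))"
  shows "S \<subseteq> pos_cone (subdifferential (\<lambda>x. Max ((\<lambda>i. F i x) ` I)) x0)"
    and "pos_cone (subdifferential (\<lambda>x. Max ((\<lambda>i. F i x) ` I)) x0) \<subseteq> Z"
    and "Z \<subseteq> closure S"
proof -
  have A: "\<forall>i\<in>I. convex (subdifferential (F i) x0) \<and> subdifferential (F i) x0 \<noteq> {}"
    using F by (simp add: convex_subdifferential subdifferential_norm_nonempty)
  show "S \<subseteq> pos_cone (subdifferential (\<lambda>x. Max ((\<lambda>i. F i x) ` I)) x0)"
    unfolding S_def subdifferential_Max_norms[OF I F active]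
    by (rule sum_pos_cone_subset_pos_cone_convex_hull[OF I])
  show "pos_cone (subdifferential (\<lambda>x. Max ((\<lambda>i. F i x) ` I)) x0) \<subseteq> Z"
    unfolding Z_def subdifferential_Max_norms[OF I F active]
    by (rule pos_cone_convex_hull_subset_sum[OF I(1) A])
  show "Z \<subseteq> closure S"
    unfolding S_def Z_def using A by (intro sum_insert_zero_pos_cone_subset_closure[OF I(1)]) auto
qed

lemma dual_norm_le_iff:
  fixes N :: "'a::euclidean_space \<Rightarrow> real"
  assumes N: "is_norm N"
  shows "dual_norm N x \<le> t \<longleftrightarrow> (\<forall>z. inner x z \<le> t * N z)"
proof -
  define X where "X = {\<bar>inner z x\<bar> | z. N z = 1}"
  have unit: "N ((1 / N z) *\<^sub>R z) = 1" if "z \<noteq> 0" for z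
    using is_norm_scaleR[OF N] is_norm_pos[OF N that] by simp
  obtain b :: 'a where "b \<in> Basis" using nonempty_Basis by blast
  then have "X \<noteq> {}" unfolding X_def using unit[of b] by (auto simp: nonzero_Basis)
  obtain m where m: "0 < m" "\<And>z. m * norm z \<le> N z" using is_norm_ge_norm[OF N] by blast
  have "bdd_above X"
  proof (rule bdd_aboveI)
    fix w assume "w \<in> X"
    then obtain z where z: "w = \<bar>inner z x\<bar>" "N z = 1" unfolding X_def by blast
    have "norm z \<le> 1 / m" using m(2)[of z] z(2) m(1) by (simp add: field_simps)
    then have "norm z * norm x \<le> (1 / m) * norm x" by (rule mult_right_mono) simp
    then show "w \<le> (1 / m) * norm x" using z(1) Cauchy_Schwarz_ineq2[of z x] by simp
  qed
  show ?thesis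
  proof
    assume le: "dual_norm N x \<le> t"
    show "\<forall>z. inner x z \<le> t * N z"
    proof
      fix z show "inner x z \<le> t * N z"
      proof (cases "z = 0")
        case True then show ?thesis using is_norm_zero[OF N] by simp
      next
        case False
        have "\<bar>inner ((1 / N z) *\<^sub>R z) x\<bar> \<in> X" unfolding X_def using unit[OF False] by blast
        then have "\<bar>inner ((1 / N z) *\<^sub>R z) x\<bar> \<le> dual_norm N x"
          unfolding dual_norm_def X_def[symmetric] using \<open>bdd_above X\<close> by (rule cSup_upper)
        then have "\<bar>inner x z\<bar> / N z \<le> t" using le is_norm_pos[OF N False] by (simp add: inner_commute)
        then have "\<bar>inner x z\<bar> \<le> t * N z" using is_norm_pos[OF N False] by (simp add: pos_divide_le_eq)
        then show ?thesis by (meson abs_ge_self order_trans)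
      qed
    qed
  next
    assume le: "\<forall>z. inner x z \<le> t * N z"
    have "\<bar>inner z x\<bar> \<le> t" if "N z = 1" for z
      using le[rule_format, of z] le[rule_format, of "- z"] is_norm_minus[OF N, of z] that
      by (simp add: inner_commute)
    then show "dual_norm N x \<le> t"
      unfolding dual_norm_def using \<open>X \<noteq> {}\<close> by (intro cSup_least) (auto simp: X_def)
  qed
qed

lemma insert_zero_pos_cone_subdifferential_iff:
  fixes N :: "'a::euclidean_space \<Rightarrow> real"
  assumes N: "is_norm N"
  shows "x \<in> insert 0 (pos_cone (subdifferential N x0))
    \<longleftrightarrow> (\<exists>t\<ge>0. dual_norm N x \<le> t \<and> inner x x0 = t * N x0)"
proof
  assume "x \<in> insert 0 (pos_cone (subdifferential N x0))"
  then show "\<exists>t\<ge>0. dual_norm N x \<le> t \<and> inner x x0 = t * N x0"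
  proof
    assume "x = 0"
    then show ?thesis by (intro exI[of _ 0]) (simp add: dual_norm_le_iff[OF N])
  next
    assume "x \<in> pos_cone (subdifferential N x0)"
    then obtain t s where x: "x = t *\<^sub>R s" "0 < t" and s: "s \<in> subdifferential N x0"
      unfolding pos_cone_def by blast
    have "\<forall>z. inner x z \<le> t * N z" "inner x x0 = t * N x0"
      using s x unfolding subdifferential_norm_iff[OF N] by auto
    then show ?thesis using x(2) by (intro exI[of _ t]) (simp add: dual_norm_le_iff[OF N])
  qed
next
  assume "\<exists>t\<ge>0. dual_norm N x \<le> t \<and> inner x x0 = t * N x0"
  then obtain t where t: "0 \<le> t" and le: "\<forall>z. inner x z \<le> t * N z" and eq: "inner x x0 = t * N x0"
    using dual_norm_le_iff[OF N] by blast
  show "x \<in> insert 0 (pos_cone (subdifferential N x0))"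
  proof (cases "t = 0")
    case True
    then have "inner x x \<le> 0" using le by simp
    then have "x = 0" by (metis inner_ge_zero inner_eq_zero_iff order_antisym)
    then show ?thesis by simp
  next
    case False
    then have "(1 / t) *\<^sub>R x \<in> subdifferential N x0"
      unfolding subdifferential_norm_iff[OF N] using t le eq by (simp add: divide_le_eq mult.commute)
    moreover have "x = t *\<^sub>R ((1 / t) *\<^sub>R x)" using False by simp
    moreover have "0 < t" using t False by simp
    ultimately show ?thesis unfolding pos_cone_def by blast
  qed
qed

lemma sum_insert_zero_pos_cone_subdifferential_eq:
  fixes N :: "'i \<Rightarrow> 'a::euclidean_space \<Rightarrow> real"
  assumes I: "finite I" and N: "\<forall>i\<in>I. is_norm (N i)" and pos: "\<forall>i\<in>I. 0 < N i x0"
  shows "(\<Sum>i\<in>I. insert 0 (pos_cone (subdifferential (N i) x0)))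
    = {\<Sum>i\<in>I. x i | x \<tau>. \<forall>i\<in>I. 0 \<le> \<tau> i \<and> inner (x i) x0 = \<tau> i \<and> dual_norm (N i) (x i) \<le> \<tau> i / N i x0}"
proof -
  have iff: "x \<in> insert 0 (pos_cone (subdifferential (N i) x0))
      \<longleftrightarrow> (\<exists>\<tau>\<ge>0. inner x x0 = \<tau> \<and> dual_norm (N i) x \<le> \<tau> / N i x0)" if "i \<in> I" for i x
  proof -
    have "(\<exists>t\<ge>0. dual_norm (N i) x \<le> t \<and> inner x x0 = t * N i x0)
        \<longleftrightarrow> (\<exists>\<tau>\<ge>0. inner x x0 = \<tau> \<and> dual_norm (N i) x \<le> \<tau> / N i x0)"
      using pos that by (metis divide_nonneg_pos mult_nonneg_nonneg nonzero_eq_divide_eq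
          less_irrefl order_less_imp_le)
    then show ?thesis using insert_zero_pos_cone_subdifferential_iff N that by blast
  qed
  show ?thesis unfolding set_sum_alt[OF I]
  proof (intro equalityI subsetI)
    fix y assume "y \<in> {sum x I |x. \<forall>i\<in>I. x i \<in> insert 0 (pos_cone (subdifferential (N i) x0))}"
    then obtain x where "y = sum x I" "\<forall>i\<in>I. x i \<in> insert 0 (pos_cone (subdifferential (N i) x0))"
      by blast
    then show "y \<in> {\<Sum>i\<in>I. x i | x \<tau>. \<forall>i\<in>I. 0 \<le> \<tau> i \<and> inner (x i) x0 = \<tau> i
        \<and> dual_norm (N i) (x i) \<le> \<tau> i / N i x0}"
      using iff by (auto intro!: exI[of _ x] exI[of _ "\<lambda>i. inner (x i) x0"])
  qed (use iff in auto)
qed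

theorem mainTheorem9:
  fixes N :: "nat \<Rightarrow> 'a::euclidean_space \<Rightarrow> real"
    and k :: nat and x0 g :: 'a
  assumes k: "k \<ge> 1"
    and norms: "\<forall>i\<in>{1..k}. is_norm (N i)"
    and x0: "x0 \<noteq> 0"
  defines "\<mu> \<equiv> (\<lambda>i. 1 / N i x0)"
  defines "Nmax \<equiv> (\<lambda>x. Max ((\<lambda>i. \<mu> i * N i x) ` {1..k}))"
  shows "Inf ((\<lambda>y. norm (g - y)) ` pos_cone (subdifferential Nmax x0))
           = Inf ((\<lambda>y. norm (g - y)) `
               {\<Sum>i\<in>{1..k}. x i | x. \<forall>i\<in>{1..k}. x i \<in> pos_cone (subdifferential (N i) x0)})
       \<and> Inf ((\<lambda>y. norm (g - y)) `
               {\<Sum>i\<in>{1..k}. x i | x. \<forall>i\<in>{1..k}. x i \<in> pos_cone (subdifferential (N i) x0)})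
           = Inf {norm (g - (\<Sum>i\<in>{1..k}. x i)) | x \<tau>.
               \<forall>i\<in>{1..k}. \<tau> i \<ge> 0 \<and> inner (x i) x0 = \<tau> i * Nmax x0
                  \<and> dual_norm (N i) (x i) \<le> \<tau> i * \<mu> i}"
proof -
  define I where "I = {1..k}"
  define F where "F i = (\<lambda>x. \<mu> i * N i x)" for i
  define S where "S = (\<Sum>i\<in>I. pos_cone (subdifferential (N i) x0))"
  define Z where "Z = (\<Sum>i\<in>I. insert 0 (pos_cone (subdifferential (N i) x0)))"
  have I: "finite I" "I \<noteq> {}" using k unfolding I_def by auto
  have N: "\<forall>i\<in>I. is_norm (N i)" and pos: "\<forall>i\<in>I. 0 < N i x0"
    using norms is_norm_pos[OF _ x0] unfolding I_def by auto
  then have \<mu>: "0 < \<mu> i" "F i x0 = 1" if "i \<in> I" for i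
    using that unfolding \<mu>_def F_def by auto
  then have F: "\<forall>i\<in>I. is_norm (F i)" "\<forall>i\<in>I. F i x0 = 1"
    using N unfolding F_def by (auto intro: is_norm_cmult)
  have "(\<Sum>i\<in>I. pos_cone (subdifferential (F i) x0)) = S"
    "(\<Sum>i\<in>I. insert 0 (pos_cone (subdifferential (F i) x0))) = Z"
    unfolding S_def Z_def F_def using \<mu> by (auto simp: pos_cone_subdifferential_cmult intro!: sum.cong)
  moreover have "Nmax = (\<lambda>x. Max ((\<lambda>i. F i x) ` I))" unfolding Nmax_def F_def I_def ..
  ultimately have SP: "S \<subseteq> pos_cone (subdifferential Nmax x0)"
    and PZ: "pos_cone (subdifferential Nmax x0) \<subseteq> Z" and ZS: "Z \<subseteq> closure S"
    using pos_cone_subdifferential_Max_norms_between[OF I F] by simp_all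
  have "0 \<in> Z" unfolding Z_def set_sum_alt[OF I(1)] by (auto intro!: exI[of _ "\<lambda>_. 0"])
  then have "S \<noteq> {}" using ZS by auto
  have "(\<lambda>i. F i x0) ` I = {1}" using F I by auto
  then have "Nmax x0 = 1" unfolding \<open>Nmax = _\<close> by simp
  then have "{norm (g - (\<Sum>i\<in>I. x i)) | x \<tau>. \<forall>i\<in>I. \<tau> i \<ge> 0 \<and> inner (x i) x0 = \<tau> i * Nmax x0
      \<and> dual_norm (N i) (x i) \<le> \<tau> i * \<mu> i} = (\<lambda>y. norm (g - y)) ` Z"
    unfolding Z_def sum_insert_zero_pos_cone_subdifferential_eq[OF I(1) N pos] \<mu>_def
    by (simp add: image_Collect) blast
  moreover have "{\<Sum>i\<in>I. x i | x. \<forall>i\<in>I. x i \<in> pos_cone (subdifferential (N i) x0)} = S"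
    unfolding S_def by (rule set_sum_alt[OF I(1), symmetric])
  ultimately show ?thesis
    unfolding I_def[symmetric]
    using Inf_norm_diff_image_eq_of_subset_closure[OF \<open>S \<noteq> {}\<close> SP order_trans[OF PZ ZS]]
      Inf_norm_diff_image_eq_of_subset_closure[OF \<open>S \<noteq> {}\<close> order_trans[OF SP PZ] ZS]
    by simp
qed

end
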